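(* Let $\varepsilon=\left(\begin{smallmatrix} -1&0\\ 0&1 \end{smallmatrix}\right)$, $S=\left(\begin{smallmatrix} 0&-1\\ 1&0 \end{smallmatrix}\right)$, $T=\left(\begin{smallmatrix} 1&1\\ 0&1 \end{smallmatrix}\right)$, $T_{\omega}=\left(\begin{smallmatrix} 1&\omega\\ 0&1 \end{smallmatrix}\right)$ where $\omega=\frac{1+\sqrt{-7}}{2}$, and let $\mathbf{1}$ denote the identity matrix. Then, \begin{itemize} \item [(1)] $P_{k,\Delta}(\bar{z},z)=P_{k,\Delta}(z,\bar{z})$. \item [(2)] $P_{k,\Delta}(uz,\bar{u}\bar{z})=P_{k,\Delta}(z,\bar{z})$ for any unit $u \in \mathcal{O}_d$. \item [(3)] $P_{k,\Delta}|(\mathbf{1}+S)=0$. \item [(4)] $P_{k,\Delta}|(\mathbf{1}+TS\varepsilon-T)=0$. \item [(5)] Additionally, when $d=7$ (so $P_{k,\Delta}\in V_{k,k}(\mathcal{O}_7)$) we have \[ P_{k,\Delta}|(\mathbf{1}-T_{\omega}-ST^{-1}T_{\omega}S-TT_{\omega}^{-1}ST_{\omega})=0.\] \end{itemize}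
   Context: Let $d\in\{1,2,3,7,11\}$, $K=\mathbb{Q}(\sqrt{-d})$ the corresponding Euclidean imaginary quadratic field and $\mathcal{O}_d$ its ring of integers, with norm $N(b)=b\bar b$. Let $k\geq 1$ be an odd integer and $\Delta$ a positive integer that is not a norm of an element of $\mathcal{O}_d$. Define the polynomial $$P_{k,\Delta}(z,\bar{z})=\sum_{\substack{a,c\in\mathbb{Z},\ b\in\mathcal{O}_d\\ N(b)-ac=\Delta \\ c<0<a}} \left(az\bar{z}+bz+\bar{b}\bar{z}+c\right)^{k}.$$ For a polynomial $P(z,\bar z)$ of degree at most $k$ in each of $z,\bar z$ and a matrix $\gamma=\left(\begin{smallmatrix} a&b\\ c&e\end{smallmatrix}\right)$ (with complex entries, modulo $\pm 1$), the right action is $(P|\gamma)(z,\bar z)=(cz+e)^{k}\overline{(cz+e)}^{k}P\left(\frac{az+b}{cz+e},\frac{\bar a\bar z+\bar b}{\bar c\bar z+\bar e}\right)$, extended linearly to formal integer combinations of matrices (the group ring); in particular $P|\varepsilon=P(-z,-\bar z)$. *)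

theory Defs
  imports Complex_Main "HOL-Computational_Algebra.Polynomial"
begin

definition omega_d :: "nat \<Rightarrow> complex" where
  "omega_d d = (if d mod 4 = 3 then (1 + \<i> * complex_of_real (sqrt (real d))) / 2
                else \<i> * complex_of_real (sqrt (real d)))"

definition Od :: "nat \<Rightarrow> complex set" where
  "Od d = {of_int m + of_int n * omega_d d | m n :: int. True}"

definition Nrm :: "complex \<Rightarrow> complex" where
  "Nrm b = b * cnj b"

definition is_unit_Od :: "nat \<Rightarrow> complex \<Rightarrow> bool" where
  "is_unit_Od d u \<longleftrightarrow> u \<in> Od d \<and> u \<noteq> 0 \<and> inverse u \<in> Od d"

text \<open>A polynomial P(z, zbar) is represented as a nested polynomial: the outer
 variable is zbar (written w), its coefficients are polynomials in z.\<close>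

type_synonym bipoly = "complex poly poly"

definition bieval :: "bipoly \<Rightarrow> complex \<Rightarrow> complex \<Rightarrow> complex" where
  "bieval P z w = poly (poly P [:w:]) z"

definition quad_form :: "int \<Rightarrow> complex \<Rightarrow> int \<Rightarrow> bipoly" where
  "quad_form a b c = [: [:of_int c, b:], [:cnj b, of_int a:] :]"
  (* = a z w + b z + cnj b w + c *)

definition P_kD :: "nat \<Rightarrow> nat \<Rightarrow> nat \<Rightarrow> bipoly" where
  "P_kD d k \<Delta> = (\<Sum>(a, b, c) \<in> {(a, b, c) | (a::int) (b::complex) (c::int).
        b \<in> Od d \<and> Nrm b - of_int (a * c) = of_nat \<Delta> \<and> c < 0 \<and> 0 < a}.
      (quad_form a b c) ^ k)"

type_synonym mat2 = "complex \<times> complex \<times> complex \<times> complex"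
  (* (a, b, c, e) stands for the matrix ((a, b), (c, e)) *)

definition mmul :: "mat2 \<Rightarrow> mat2 \<Rightarrow> mat2" where
  "mmul M N = (case M of (a, b, c, e) \<Rightarrow> case N of (a', b', c', e') \<Rightarrow>
     (a * a' + b * c', a * b' + b * e', c * a' + e * c', c * b' + e * e'))"

definition minv :: "mat2 \<Rightarrow> mat2" where
  "minv M = (case M of (a, b, c, e) \<Rightarrow>
     let D = a * e - b * c in (e / D, - b / D, - c / D, a / D))"

definition one_m :: mat2 where "one_m = (1, 0, 0, 1)"
definition eps_m :: mat2 where "eps_m = (-1, 0, 0, 1)"
definition S_m :: mat2 where "S_m = (0, -1, 1, 0)"
definition T_m :: mat2 where "T_m = (1, 1, 0, 1)"
definition omega7 :: complex where
  "omega7 = (1 + \<i> * complex_of_real (sqrt 7)) / 2"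
definition Tw_m :: mat2 where "Tw_m = (1, omega7, 0, 1)"

text \<open>Homogenised substitution in the variable z: for p of degree at most k,
 (cz+e)^k p((az+b)/(cz+e)).\<close>
definition hcomp :: "nat \<Rightarrow> complex \<Rightarrow> complex \<Rightarrow> complex \<Rightarrow> complex \<Rightarrow>
    complex poly \<Rightarrow> complex poly" where
  "hcomp k a b c e p = (\<Sum>i\<le>k. smult (coeff p i) ([:b, a:] ^ i * [:e, c:] ^ (k - i)))"

text \<open>(P|gamma)(z,zbar) = (cz+e)^k (cbar zbar + ebar)^k P((az+b)/(cz+e), (abar zbar+bbar)/(cbar zbar+ebar)),
 for P of degree at most k in each variable, written without division.\<close>
definition slash :: "nat \<Rightarrow> bipoly \<Rightarrow> mat2 \<Rightarrow> bipoly" where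
  "slash k P M = (case M of (a, b, c, e) \<Rightarrow>
     let P1 = map_poly (hcomp k a b c e) P in
     (\<Sum>j\<le>k. [: coeff P1 j :] *
        ([: [:cnj b:], [:cnj a:] :] ^ j * [: [:cnj e:], [:cnj c:] :] ^ (k - j))))"

text \<open>Linear extension to the group ring: an element is a formal integer
 combination of matrices, given as a list of (coefficient, matrix).\<close>
definition slash_gr :: "nat \<Rightarrow> bipoly \<Rightarrow> (int \<times> mat2) list \<Rightarrow> bipoly" where
  "slash_gr k P xs = (\<Sum>(n, M) \<leftarrow> xs. of_int n * slash k P M)"

end

(* P_{k,Delta} is the sum of Q_F^k, Q_F(z, zbar) = A z zbar + B z + Bbar zbar + C, over the finite
   set of integral Hermitian forms F = [A, B, C] of discriminant N(B) - AC = Delta with A > 0 > C,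
   and in weight k one has Q_F^k | gamma = Q_{F gamma}^k for the right action of gamma on forms.
   Hence for a relation sum_i c_i gamma_i, P | sum_i c_i gamma_i = sum_G n(G) Q_G^k, where n(G)
   counts (with the signs c_i) the indices i for which G gamma_i^-1 has A > 0 > C.  Since Delta is
   not a norm, A and C never vanish, so n(-G) - n(G) is a signed count of sign changes of the outer
   coefficients of the forms G gamma_i^-1; for each relation these coefficients coincide in pairs
   and the count telescopes to 0.  As k is odd, Q_{-G}^k = -Q_G^k, and the sum cancels in pairs.
   Parts (1) and (2) are the symmetries B -> Bbar and B -> u B of the index set. *)

theory Submission
  imports Defs "HOL-Library.Product_Plus" "HOL-Library.Disjoint_Sets"
begin

section \<open>The order \<open>Od d\<close>\<close>

lemma omega_d_add_cnj_Ints: "omega_d d + cnj (omega_d d) \<in> \<int>"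
proof (cases "d mod 4 = 3")
  case True
  then have "omega_d d + cnj (omega_d d) = 1"
    by (simp add: omega_d_def complex_eq_iff)
  then show ?thesis by simp
qed (simp add: omega_d_def complex_eq_iff)

lemma omega_d_mult_cnj_Ints: "omega_d d * cnj (omega_d d) \<in> \<int>"
proof (cases "d mod 4 = 3")
  case True
  then obtain q where "d = 4 * q + 3"
    by (metis div_mult_mod_eq mult.commute)
  then have "omega_d d * cnj (omega_d d) = of_nat (q + 1)"
    by (simp add: omega_d_def complex_eq_iff field_simps)
  then show ?thesis by (metis Ints_of_nat)
next
  case False
  then have "omega_d d * cnj (omega_d d) = of_nat d"
    by (simp add: omega_d_def complex_eq_iff)
  then show ?thesis by (metis Ints_of_nat)
qed

lemma Od_iff: "x \<in> Od d \<longleftrightarrow> (\<exists>m n. x = of_int m + of_int n * omega_d d)"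
  by (auto simp: Od_def)

lemma Ints_imp_Od: "x \<in> \<int> \<Longrightarrow> x \<in> Od d"
  unfolding Od_iff by (metis Ints_cases add_0_right mult_zero_left of_int_0)

lemma Od_0 [simp]: "0 \<in> Od d"
  and Od_1 [simp]: "1 \<in> Od d"
  by (simp_all add: Ints_imp_Od)

lemma omega_d_in_Od: "omega_d d \<in> Od d"
  unfolding Od_iff by (rule exI[of _ 0], rule exI[of _ 1]) simp

lemma Od_add:
  assumes "x \<in> Od d" "y \<in> Od d"
  shows "x + y \<in> Od d"
proof -
  obtain m n m' n' where "x = of_int m + of_int n * omega_d d" "y = of_int m' + of_int n' * omega_d d"
    using assms by (auto simp: Od_iff)
  then have "x + y = of_int (m + m') + of_int (n + n') * omega_d d"
    by (simp add: algebra_simps)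
  then show ?thesis unfolding Od_iff by blast
qed

lemma Od_uminus:
  assumes "x \<in> Od d"
  shows "- x \<in> Od d"
proof -
  obtain m n where "x = of_int m + of_int n * omega_d d"
    using assms by (auto simp: Od_iff)
  then have "- x = of_int (- m) + of_int (- n) * omega_d d"
    by simp
  then show ?thesis unfolding Od_iff by blast
qed

lemma Od_diff:
  assumes "x \<in> Od d" "y \<in> Od d"
  shows "x - y \<in> Od d"
  using Od_add[OF assms(1) Od_uminus[OF assms(2)]] by simp

lemma Od_mult:
  assumes "x \<in> Od d" "y \<in> Od d"
  shows "x * y \<in> Od d"
proof -
  let ?\<omega> = "omega_d d"
  obtain m n m' n' where xy: "x = of_int m + of_int n * ?\<omega>" "y = of_int m' + of_int n' * ?\<omega>"
    using assms by (auto simp: Od_iff)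
  obtain t N where t: "?\<omega> + cnj ?\<omega> = of_int t" and N: "?\<omega> * cnj ?\<omega> = of_int N"
    using omega_d_add_cnj_Ints omega_d_mult_cnj_Ints by (metis Ints_cases)
  have "?\<omega> * ?\<omega> = (?\<omega> + cnj ?\<omega>) * ?\<omega> - ?\<omega> * cnj ?\<omega>"
    by (simp add: algebra_simps)
  then have \<omega>2: "?\<omega> * ?\<omega> = of_int t * ?\<omega> - of_int N"
    by (simp only: t N)
  have "x * y = of_int (m * m') + of_int (m * n' + m' * n) * ?\<omega> + of_int (n * n') * (?\<omega> * ?\<omega>)"
    unfolding xy by (simp add: algebra_simps)
  also have "\<dots> = of_int (m * m' - n * n' * N) + of_int (m * n' + m' * n + n * n' * t) * ?\<omega>"
    unfolding \<omega>2 by (simp add: algebra_simps)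
  finally show ?thesis unfolding Od_iff by blast
qed

lemma Od_cnj:
  assumes "x \<in> Od d"
  shows "cnj x \<in> Od d"
proof -
  obtain m n where x: "x = of_int m + of_int n * omega_d d"
    using assms by (auto simp: Od_iff)
  obtain t where t: "omega_d d + cnj (omega_d d) = of_int t"
    using omega_d_add_cnj_Ints by (metis Ints_cases)
  have "cnj x = of_int m + of_int n * (omega_d d + cnj (omega_d d)) - of_int n * omega_d d"
    unfolding x by (simp add: algebra_simps)
  also have "\<dots> = of_int (m + n * t) + of_int (- n) * omega_d d"
    unfolding t by (simp add: algebra_simps)
  finally show ?thesis unfolding Od_iff by blast
qed

lemma Od_add_cnj_Ints:
  assumes "x \<in> Od d"
  shows "x + cnj x \<in> \<int>"
proof -
  obtain m n where x: "x = of_int m + of_int n * omega_d d"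
    using assms by (auto simp: Od_iff)
  have "x + cnj x = 2 * of_int m + of_int n * (omega_d d + cnj (omega_d d))"
    unfolding x by (simp add: algebra_simps)
  then show ?thesis
    using omega_d_add_cnj_Ints by simp
qed

lemma Od_mult_cnj_Ints:
  assumes "x \<in> Od d"
  shows "x * cnj x \<in> \<int>"
proof -
  obtain m n where x: "x = of_int m + of_int n * omega_d d"
    using assms by (auto simp: Od_iff)
  have "x * cnj x = of_int (m * m) + of_int (m * n) * (omega_d d + cnj (omega_d d))
      + of_int (n * n) * (omega_d d * cnj (omega_d d))"
    unfolding x by (simp add: algebra_simps)
  then show ?thesis
    using omega_d_add_cnj_Ints omega_d_mult_cnj_Ints by simp
qed

lemma is_unit_Od_mult_cnj:
  assumes "is_unit_Od d u"
  shows "u * cnj u = 1"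
proof -
  have u: "u \<in> Od d" "inverse u \<in> Od d" "u \<noteq> 0"
    using assms by (auto simp: is_unit_Od_def)
  obtain p where p: "u * cnj u = of_int p"
    using Od_mult_cnj_Ints[OF u(1)] by (auto elim: Ints_cases)
  obtain q where q: "inverse u * cnj (inverse u) = of_int q"
    using Od_mult_cnj_Ints[OF u(2)] by (auto elim: Ints_cases)
  have "of_int (p * q) = (1 :: complex)"
    using u(3) by (simp flip: p q add: field_simps complex_cnj_inverse)
  then have "p * q = 1"
    by (metis of_int_eq_1_iff)
  moreover have "real_of_int p = (Re u)\<^sup>2 + (Im u)\<^sup>2"
    using arg_cong[OF p, of Re] by (simp add: complex_mult_cnj)
  then have "0 \<le> p"
    by (metis of_int_0_le_iff sum_power2_ge_zero)
  ultimately show ?thesis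
    using p zmult_eq_1_iff by auto
qed

lemma finite_Od_norm_le:
  assumes "0 < d"
  shows "finite {b \<in> Od d. cmod b \<le> R}"
proof -
  let ?\<omega> = "omega_d d"
  have Im_pos: "0 < Im ?\<omega>"
    using assms by (simp add: omega_d_def)
  have Re_le: "\<bar>Re ?\<omega>\<bar> \<le> 1"
    by (simp add: omega_d_def)
  define K where "K = \<lceil>R / Im ?\<omega>\<rceil> + \<lceil>R\<rceil>"
  have "{b \<in> Od d. cmod b \<le> R} \<subseteq> (\<lambda>(m, n). of_int m + of_int n * ?\<omega>) ` ({-K..K} \<times> {-K..K})"
  proof
    fix b
    assume "b \<in> {b \<in> Od d. cmod b \<le> R}"
    then obtain m n where b: "b = of_int m + of_int n * ?\<omega>" and R: "cmod b \<le> R"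
      by (auto simp: Od_iff)
    have "\<bar>of_int n\<bar> * Im ?\<omega> = \<bar>Im b\<bar>"
      using Im_pos by (simp add: b abs_mult)
    also have "\<dots> \<le> R"
      using R abs_Im_le_cmod order_trans by blast
    finally have n: "\<bar>of_int n\<bar> \<le> R / Im ?\<omega>"
      using Im_pos by (simp add: field_simps)
    have "\<bar>of_int n * Re ?\<omega>\<bar> \<le> \<bar>of_int n\<bar>"
      using Re_le by (simp add: abs_mult mult_left_le)
    moreover have "Re b = of_int m + of_int n * Re ?\<omega>"
      by (simp add: b)
    moreover have "\<bar>Re b\<bar> \<le> R"
      using R abs_Re_le_cmod order_trans by blast
    ultimately have "real_of_int \<bar>m\<bar> \<le> of_int K" "real_of_int \<bar>n\<bar> \<le> of_int K"
      using n le_of_int_ceiling[of R] le_of_int_ceiling[of "R / Im ?\<omega>"]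
      unfolding K_def of_int_add of_int_abs by arith+
    then have "(m, n) \<in> {-K..K} \<times> {-K..K}"
      by (simp only: of_int_le_iff) auto
    then show "b \<in> (\<lambda>(m, n). of_int m + of_int n * ?\<omega>) ` ({-K..K} \<times> {-K..K})"
      using b by force
  qed
  then show ?thesis
    by (rule finite_subset) simp
qed

lemma bieval_0 [simp]: "bieval 0 z w = 0"
  and bieval_add [simp]: "bieval (P + Q) z w = bieval P z w + bieval Q z w"
  and bieval_diff [simp]: "bieval (P - Q) z w = bieval P z w - bieval Q z w"
  and bieval_power [simp]: "bieval (P ^ n) z w = bieval P z w ^ n"
  by (simp_all add: bieval_def poly_power)

lemma bieval_sum [simp]: "bieval (\<Sum>x\<in>S. f x) z w = (\<Sum>x\<in>S. bieval (f x) z w)"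
  by (induction S rule: infinite_finite_induct) simp_all

lemma bieval_eq_poly_map_poly: "bieval P z w = poly (map_poly (\<lambda>q. poly q z) P) w"
  by (induction P) (simp_all add: bieval_def map_poly_pCons)

lemma poly_eq_sum_atMost:
  fixes p :: "'a::comm_semiring_1 poly"
  assumes "degree p \<le> n"
  shows "poly p x = (\<Sum>i\<le>n. coeff p i * x ^ i)"
  unfolding poly_altdef using assms
  by (intro sum.mono_neutral_left) (auto simp: coeff_eq_0)

lemma bieval_eq_sum_atMost:
  assumes "degree P \<le> n"
  shows "bieval P z w = (\<Sum>j\<le>n. poly (coeff P j) z * w ^ j)"
  using poly_eq_sum_atMost[OF assms, of "[:w:]"] by (simp add: bieval_def poly_sum poly_power)

lemma poly_eq_0_if_cofinite:
  fixes p :: "complex poly"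
  assumes "finite A" "\<And>x. x \<notin> A \<Longrightarrow> poly p x = 0"
  shows "p = 0"
proof (rule ccontr)
  assume "p \<noteq> 0"
  then have "finite {x. poly p x = 0}"
    by (rule poly_roots_finite)
  moreover have "- A \<subseteq> {x. poly p x = 0}"
    using assms(2) by auto
  ultimately have "finite (- A)"
    by (rule finite_subset[rotated])
  with assms(1) show False
    by (simp add: Compl_eq_Diff_UNIV infinite_UNIV_char_0)
qed

lemma bipoly_eqI:
  assumes "finite A" "finite B" "\<And>z w. z \<notin> A \<Longrightarrow> w \<notin> B \<Longrightarrow> bieval P z w = bieval Q z w"
  shows "P = Q"
proof -
  have "coeff (P - Q) j = 0" for j
  proof (rule poly_eq_0_if_cofinite[OF assms(1)])
    fix z
    assume "z \<notin> A"
    then have "map_poly (\<lambda>q. poly q z) (P - Q) = 0"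
      using assms(3) by (intro poly_eq_0_if_cofinite[OF assms(2)]) (simp flip: bieval_eq_poly_map_poly)
    then show "poly (coeff (P - Q) j) z = 0"
      by (metis coeff_0 coeff_map_poly poly_0)
  qed
  then show ?thesis
    by (metis coeff_0 diff_eq_eq poly_eqI add_0)
qed

definition bidegree_le :: "bipoly \<Rightarrow> nat \<Rightarrow> bool" where
  "bidegree_le P k \<longleftrightarrow> degree P \<le> k \<and> (\<forall>j. degree (coeff P j) \<le> k)"

lemma bidegree_le_mult:
  assumes "bidegree_le P m" "bidegree_le Q n"
  shows "bidegree_le (P * Q) (m + n)"
proof -
  have "degree (coeff P i * coeff Q (j - i)) \<le> m + n" for i j
    using assms unfolding bidegree_le_def by (meson add_mono degree_mult_le order_trans)
  then have "degree (coeff (P * Q) j) \<le> m + n" for j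
    unfolding coeff_mult by (intro degree_sum_le) simp_all
  moreover have "degree (P * Q) \<le> m + n"
    using assms degree_mult_le[of P Q] by (simp add: bidegree_le_def)
  ultimately show ?thesis
    by (simp add: bidegree_le_def)
qed

lemma bidegree_le_power:
  assumes "bidegree_le P 1"
  shows "bidegree_le (P ^ k) k"
proof (induction k)
  case 0
  have "degree (coeff (1 :: bipoly) j) = 0" for j
    by (cases j) (simp_all add: one_pCons)
  then show ?case
    by (simp add: bidegree_le_def)
next
  case (Suc k)
  then show ?case
    using bidegree_le_mult[OF assms Suc.IH] by simp
qed

lemma bidegree_le_sum:
  assumes "\<And>x. x \<in> S \<Longrightarrow> bidegree_le (f x) k"
  shows "bidegree_le (\<Sum>x\<in>S. f x) k"
  using assms unfolding bidegree_le_def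
  by (cases "finite S") (auto intro!: degree_sum_le simp: coeff_sum)

lemma hcomp_0 [simp]: "hcomp k a b c e 0 = 0"
  by (simp add: hcomp_def)

lemma power_mult_divide_power:
  fixes D X :: complex
  assumes "i \<le> k" "D \<noteq> 0"
  shows "D ^ k * (X / D) ^ i = X ^ i * D ^ (k - i)"
proof -
  have "D ^ k = D ^ i * D ^ (k - i)"
    using assms(1) by (simp flip: power_add)
  then show ?thesis
    using assms(2) by (simp add: power_divide field_simps)
qed

lemma poly_hcomp:
  assumes "degree p \<le> k" "c * z + e \<noteq> 0"
  shows "poly (hcomp k a b c e p) z = (c * z + e) ^ k * poly p ((a * z + b) / (c * z + e))"
proof -
  have "poly (hcomp k a b c e p) z = (\<Sum>i\<le>k. coeff p i * ((a * z + b) ^ i * (c * z + e) ^ (k - i)))"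
    by (simp add: hcomp_def poly_sum poly_power algebra_simps)
  also have "\<dots> = (\<Sum>i\<le>k. (c * z + e) ^ k * (coeff p i * ((a * z + b) / (c * z + e)) ^ i))"
    using assms(2) by (intro sum.cong) (simp_all add: power_mult_divide_power)
  also have "\<dots> = (c * z + e) ^ k * poly p ((a * z + b) / (c * z + e))"
    by (simp add: sum_distrib_left poly_eq_sum_atMost[OF assms(1)])
  finally show ?thesis .
qed

lemma bieval_slash:
  assumes "bidegree_le P k" "c * z + e \<noteq> 0" "cnj c * w + cnj e \<noteq> 0"
  shows "bieval (slash k P (a, b, c, e)) z w = (c * z + e) ^ k * (cnj c * w + cnj e) ^ k *
    bieval P ((a * z + b) / (c * z + e)) ((cnj a * w + cnj b) / (cnj c * w + cnj e))"
proof -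
  let ?D = "c * z + e" and ?E = "cnj c * w + cnj e" and ?X = "cnj a * w + cnj b"
  have "bieval (slash k P (a, b, c, e)) z w =
      (\<Sum>j\<le>k. poly (hcomp k a b c e (coeff P j)) z * (?X ^ j * ?E ^ (k - j)))"
    by (simp add: slash_def Let_def bieval_def poly_sum coeff_map_poly add.commute)
  also have "\<dots> = (\<Sum>j\<le>k. ?D ^ k * ?E ^ k * (poly (coeff P j) ((a * z + b) / ?D) * (?X / ?E) ^ j))"
    using assms by (intro sum.cong) (simp_all add: bidegree_le_def poly_hcomp power_mult_divide_power)
  also have "\<dots> = ?D ^ k * ?E ^ k * bieval P ((a * z + b) / ?D) (?X / ?E)"
    using assms(1) by (simp add: bidegree_le_def bieval_eq_sum_atMost[of P k] sum_distrib_left)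
  finally show ?thesis .
qed

section \<open>Hermitian forms\<close>

type_synonym herm_form = "complex \<times> complex \<times> complex"

definition form_poly :: "herm_form \<Rightarrow> bipoly" where
  "form_poly F = (case F of (A, B, C) \<Rightarrow> [: [:C, B:], [:cnj B, A:] :])"

definition hermitian :: "herm_form \<Rightarrow> bool" where
  "hermitian F \<longleftrightarrow> cnj (fst F) = fst F \<and> cnj (snd (snd F)) = snd (snd F)"

definition form_disc :: "herm_form \<Rightarrow> complex" where
  "form_disc F = (case F of (A, B, C) \<Rightarrow> B * cnj B - A * C)"

definition mdet :: "mat2 \<Rightarrow> complex" where
  "mdet M = (case M of (a, b, c, e) \<Rightarrow> a * e - b * c)"

text \<open>The coefficients of \<open>(c z + e) (cnj c w + cnj e) Q\<^sub>F ((a z + b)/(c z + e), (cnj a w + cnj b)/(cnj c w + cnj e))\<close>,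
  i.e. \<open>form_poly (form_act \<gamma> F) = form_poly F | \<gamma>\<close> in weight 1 (lemma \<open>bieval_form_act\<close>).\<close>
definition form_act :: "mat2 \<Rightarrow> herm_form \<Rightarrow> herm_form" where
  "form_act M F = (case M of (a, b, c, e) \<Rightarrow> case F of (A, B, C) \<Rightarrow>
     (A * a * cnj a + B * a * cnj c + cnj B * c * cnj a + C * c * cnj c,
      A * a * cnj b + B * a * cnj e + cnj B * c * cnj b + C * c * cnj e,
      A * b * cnj b + B * b * cnj e + cnj B * e * cnj b + C * e * cnj e))"

lemma bieval_form_poly [simp]:
  "bieval (form_poly (A, B, C)) z w = A * z * w + B * z + cnj B * w + C"
  by (simp add: bieval_def form_poly_def algebra_simps)

lemma form_poly_uminus: "form_poly (- F) = - form_poly F"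
  by (simp add: form_poly_def split: prod.splits)

lemma bidegree_le_form_poly: "bidegree_le (form_poly F) 1"
proof -
  have "degree (coeff (form_poly F) j) \<le> 1" for j
    by (cases j; cases "j - 1") (simp_all add: form_poly_def coeff_pCons split: prod.splits)
  then show ?thesis
    by (simp add: bidegree_le_def form_poly_def split: prod.splits)
qed

lemma bieval_form_act:
  assumes "hermitian F" "c * z + e \<noteq> 0" "cnj c * w + cnj e \<noteq> 0"
  shows "(c * z + e) * (cnj c * w + cnj e) *
      bieval (form_poly F) ((a * z + b) / (c * z + e)) ((cnj a * w + cnj b) / (cnj c * w + cnj e))
    = bieval (form_poly (form_act (a, b, c, e) F)) z w"
proof -
  obtain A B C where F: "F = (A, B, C)"
    by (cases F)
  have real: "cnj A = A" "cnj C = C"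
    using assms(1) by (simp_all add: hermitian_def F)
  have clear_denominators: "D * E * (A * (X / D) * (Y / E) + B * (X / D) + cnj B * (Y / E) + C)
      = A * X * Y + B * X * E + cnj B * D * Y + C * D * E" if "D \<noteq> 0" "E \<noteq> 0" for D E X Y
    using that by (simp add: field_simps)
  have "bieval (form_poly (form_act (a, b, c, e) F)) z w =
      A * (a * z + b) * (cnj a * w + cnj b) + B * (a * z + b) * (cnj c * w + cnj e)
      + cnj B * (c * z + e) * (cnj a * w + cnj b) + C * (c * z + e) * (cnj c * w + cnj e)"
    by (simp add: form_act_def F real algebra_simps)
  then show ?thesis
    using clear_denominators[OF assms(2,3)] by (simp add: F)
qed

lemma finite_roots_linear:
  fixes c e :: complex
  assumes "(c, e) \<noteq> (0, 0)"
  shows "finite {z. c * z + e = 0}"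
proof (cases "c = 0")
  case False
  then have "{z. c * z + e = 0} = {- e / c}"
    by (auto simp: field_simps add_eq_0_iff)
  then show ?thesis
    by simp
qed (use assms in simp)

lemma slash_sum_form_power:
  assumes "finite X" "\<And>F. F \<in> X \<Longrightarrow> hermitian F" "mdet M \<noteq> 0"
  shows "slash k (\<Sum>F\<in>X. form_poly F ^ k) M = (\<Sum>F\<in>X. form_poly (form_act M F) ^ k)"
proof -
  obtain a b c e where M: "M = (a, b, c, e)"
    by (cases M)
  have "(c, e) \<noteq> (0, 0)" "(cnj c, cnj e) \<noteq> (0, 0)"
    using assms(3) by (auto simp: M mdet_def)
  note finite = this[THEN finite_roots_linear]
  have deg: "bidegree_le (\<Sum>F\<in>X. form_poly F ^ k) k"
    by (intro bidegree_le_sum bidegree_le_power bidegree_le_form_poly)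
  show ?thesis
    unfolding M
  proof (rule bipoly_eqI[OF finite])
    fix z w
    assume z: "z \<notin> {z. c * z + e = 0}" and w: "w \<notin> {w. cnj c * w + cnj e = 0}"
    let ?z' = "(a * z + b) / (c * z + e)" and ?w' = "(cnj a * w + cnj b) / (cnj c * w + cnj e)"
    have "bieval (slash k (\<Sum>F\<in>X. form_poly F ^ k) (a, b, c, e)) z w =
        (\<Sum>F\<in>X. ((c * z + e) * (cnj c * w + cnj e) * bieval (form_poly F) ?z' ?w') ^ k)"
      using z w by (simp add: bieval_slash[OF deg] sum_distrib_left power_mult_distrib)
    also have "\<dots> = (\<Sum>F\<in>X. bieval (form_poly (form_act (a, b, c, e) F)) z w ^ k)"
      using assms(2) z w by (simp add: bieval_form_act)
    finally show "bieval (slash k (\<Sum>F\<in>X. form_poly F ^ k) (a, b, c, e)) z w =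
        bieval (\<Sum>F\<in>X. form_poly (form_act (a, b, c, e) F) ^ k) z w"
      by simp
  qed
qed

lemma form_act_one_m [simp]: "form_act one_m F = F"
  by (simp add: form_act_def one_m_def split: prod.splits)

lemma form_act_uminus: "form_act M (- F) = - form_act M F"
  by (simp add: form_act_def algebra_simps split: prod.splits)

lemma form_act_mmul:
  assumes "hermitian F"
  shows "form_act M (form_act N F) = form_act (mmul N M) F"
proof -
  obtain A B C where F: "F = (A, B, C)" and "cnj A = A" "cnj C = C"
    using assms by (cases F) (simp add: hermitian_def)
  moreover obtain a b c e a' b' c' e' where "M = (a, b, c, e)" "N = (a', b', c', e')"
    by (cases M, cases N)
  ultimately show ?thesis
    by (simp add: form_act_def mmul_def algebra_simps)
qed

lemma form_disc_form_act:
  assumes "hermitian F"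
  shows "form_disc (form_act M F) = Nrm (mdet M) * form_disc F"
proof -
  obtain A B C where F: "F = (A, B, C)" and "cnj A = A" "cnj C = C"
    using assms by (cases F) (simp add: hermitian_def)
  moreover obtain a b c e where "M = (a, b, c, e)"
    by (cases M)
  ultimately show ?thesis
    by (simp add: form_disc_def form_act_def mdet_def Nrm_def algebra_simps)
qed

definition int_forms :: "nat \<Rightarrow> nat \<Rightarrow> herm_form set" where
  "int_forms d \<Delta> = {(A, B, C). A \<in> \<int> \<and> C \<in> \<int> \<and> B \<in> Od d \<and> form_disc (A, B, C) = of_nat \<Delta>}"

definition index_forms :: "nat \<Rightarrow> nat \<Rightarrow> herm_form set" where
  "index_forms d \<Delta> = {F \<in> int_forms d \<Delta>. 0 < Re (fst F) \<and> Re (snd (snd F)) < 0}"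

definition unimodular :: "nat \<Rightarrow> mat2 \<Rightarrow> bool" where
  "unimodular d M \<longleftrightarrow>
     (case M of (a, b, c, e) \<Rightarrow> a \<in> Od d \<and> b \<in> Od d \<and> c \<in> Od d \<and> e \<in> Od d) \<and> Nrm (mdet M) = 1"

lemma hermitian_if_int_forms: "F \<in> int_forms d \<Delta> \<Longrightarrow> hermitian F"
  by (auto simp: int_forms_def hermitian_def elim!: Ints_cases)

lemma uminus_int_forms: "F \<in> int_forms d \<Delta> \<Longrightarrow> - F \<in> int_forms d \<Delta>"
  by (auto simp: int_forms_def form_disc_def Od_uminus)

lemma int_forms_Re_nonzero:
  assumes "\<not> (\<exists>b\<in>Od d. Nrm b = of_nat \<Delta>)" "F \<in> int_forms d \<Delta>"
  shows "Re (fst F) \<noteq> 0" "Re (snd (snd F)) \<noteq> 0"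
proof -
  obtain A B C where F: "F = (A, B, C)" and B: "B \<in> Od d" and "A \<in> \<int>" "C \<in> \<int>"
    and disc: "B * cnj B - A * C = of_nat \<Delta>"
    using assms(2) by (auto simp: int_forms_def form_disc_def)
  moreover have "A * C \<noteq> 0"
    using assms(1) B disc by (auto simp: Nrm_def)
  ultimately show "Re (fst F) \<noteq> 0" "Re (snd (snd F)) \<noteq> 0"
    by (auto elim!: Ints_cases)
qed

lemma form_act_int_forms:
  assumes "unimodular d M" "F \<in> int_forms d \<Delta>"
  shows "form_act M F \<in> int_forms d \<Delta>"
proof -
  obtain a b c e where M: "M = (a, b, c, e)" and ent: "a \<in> Od d" "b \<in> Od d" "c \<in> Od d" "e \<in> Od d"
    using assms(1) by (cases M) (auto simp: unimodular_def)
  obtain A B C where F: "F = (A, B, C)" and A: "A \<in> \<int>" and C: "C \<in> \<int>" and B: "B \<in> Od d"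
    using assms(2) by (auto simp: int_forms_def)
  have real: "cnj A = A" "cnj C = C"
    using A C by (auto elim!: Ints_cases)
  obtain A' B' C' where F': "form_act M F = (A', B', C')"
    by (cases "form_act M F")
  have "A' = A * (a * cnj a) + (B * a * cnj c + cnj (B * a * cnj c)) + C * (c * cnj c)"
       "C' = A * (b * cnj b) + (B * b * cnj e + cnj (B * b * cnj e)) + C * (e * cnj e)"
       "B' = A * a * cnj b + B * a * cnj e + cnj B * c * cnj b + C * c * cnj e"
    using F' by (simp_all add: M F form_act_def real algebra_simps)
  moreover have "B * x * cnj y + cnj (B * x * cnj y) \<in> \<int>" if "x \<in> Od d" "y \<in> Od d" for x y
    using B that by (intro Od_add_cnj_Ints Od_mult Od_cnj)
  ultimately have "A' \<in> \<int>" "C' \<in> \<int>" "B' \<in> Od d"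
    using A B C ent by (simp_all add: Ints_add Ints_mult Od_mult_cnj_Ints Ints_imp_Od Od_add Od_mult Od_cnj)
  moreover have "form_disc (A', B', C') = of_nat \<Delta>"
    using assms hermitian_if_int_forms[OF assms(2)]
    by (simp flip: F' add: form_disc_form_act unimodular_def int_forms_def split: prod.splits)
  ultimately show ?thesis
    by (simp add: F' int_forms_def)
qed

lemma unimodular_mdet_nonzero: "unimodular d M \<Longrightarrow> mdet M \<noteq> 0"
  by (auto simp: unimodular_def Nrm_def)

lemma mmul_minv:
  assumes "mdet M \<noteq> 0"
  shows "mmul M (minv M) = one_m" "mmul (minv M) M = one_m"
  using assms by (auto simp: mmul_def minv_def mdet_def one_m_def Let_def field_simps split: prod.splits)

lemma unimodular_minv:
  assumes "unimodular d M"
  shows "unimodular d (minv M)"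
proof -
  obtain a b c e where M: "M = (a, b, c, e)" and ent: "a \<in> Od d" "b \<in> Od d" "c \<in> Od d" "e \<in> Od d"
    and det: "(a * e - b * c) * cnj (a * e - b * c) = 1"
    using assms by (cases M) (auto simp: unimodular_def mdet_def Nrm_def)
  define D where "D = a * e - b * c"
  have "D \<in> Od d"
    using ent by (simp add: D_def Od_diff Od_mult)
  have "inverse D = cnj D"
    using det unfolding D_def by (rule inverse_unique)
  then have minv: "minv M = (e * cnj D, - b * cnj D, - c * cnj D, a * cnj D)"
    by (simp add: M minv_def Let_def divide_inverse flip: D_def)
  have "mdet (minv M) = D * cnj D * cnj D"
    by (simp add: minv mdet_def D_def algebra_simps)
  then show ?thesis
    using ent det \<open>D \<in> Od d\<close>
    by (simp add: unimodular_def minv Nrm_def Od_mult Od_cnj Od_uminus mult.commute flip: D_def)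
qed

lemma form_act_minv:
  assumes "mdet M \<noteq> 0" "hermitian F"
  shows "form_act (minv M) (form_act M F) = F" "form_act M (form_act (minv M) F) = F"
  using assms by (simp_all add: form_act_mmul mmul_minv)

lemma image_form_act_iff:
  assumes "unimodular d M" "X \<subseteq> int_forms d \<Delta>" "G \<in> int_forms d \<Delta>"
  shows "G \<in> form_act M ` X \<longleftrightarrow> form_act (minv M) G \<in> X"
proof
  assume "G \<in> form_act M ` X"
  then obtain F where "F \<in> X" "G = form_act M F"
    by blast
  then show "form_act (minv M) G \<in> X"
    using assms(1,2) by (auto simp: form_act_minv unimodular_mdet_nonzero hermitian_if_int_forms)
next
  assume "form_act (minv M) G \<in> X"
  moreover have "G = form_act M (form_act (minv M) G)"
    using assms(1,3) by (simp add: form_act_minv unimodular_mdet_nonzero hermitian_if_int_forms)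
  ultimately show "G \<in> form_act M ` X"
    by blast
qed

lemma index_forms_eq_image:
  "index_forms d \<Delta> = (\<lambda>(a, b, c). (of_int a, b, of_int c)) `
     {(a, b, c) | (a::int) (b::complex) (c::int). b \<in> Od d \<and> Nrm b - of_int (a * c) = of_nat \<Delta> \<and> c < 0 \<and> 0 < a}"
  (is "_ = ?emb ` ?S")
proof
  show "index_forms d \<Delta> \<subseteq> ?emb ` ?S"
  proof
    fix F
    assume "F \<in> index_forms d \<Delta>"
    then obtain a B c where "F = (of_int a, B, of_int c)" "B \<in> Od d"
      "Nrm B - of_int (a * c) = of_nat \<Delta>" "c < 0" "0 < a"
      by (auto simp: index_forms_def int_forms_def form_disc_def Nrm_def elim!: Ints_cases)
    then show "F \<in> ?emb ` ?S"
      by force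
  qed
qed (auto simp: index_forms_def int_forms_def form_disc_def Nrm_def)

lemma P_kD_eq_sum_index_forms: "P_kD d k \<Delta> = (\<Sum>F\<in>index_forms d \<Delta>. form_poly F ^ k)"
  unfolding P_kD_def index_forms_eq_image
  by (subst sum.reindex) (auto simp: inj_on_def quad_form_def form_poly_def intro!: sum.cong)

lemma finite_index_forms:
  assumes "0 < d"
  shows "finite (index_forms d \<Delta>)"
proof -
  let ?box = "of_int ` {0..int \<Delta>} \<times> {b \<in> Od d. cmod b \<le> sqrt \<Delta>} \<times> of_int ` {- int \<Delta>..0}"
  have "index_forms d \<Delta> \<subseteq> ?box"
  proof
    fix F
    assume "F \<in> index_forms d \<Delta>"
    then obtain a B c where F: "F = (of_int a, B, of_int c)" and B: "B \<in> Od d" and "0 < a" "c < 0"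
      and disc: "B * cnj B - of_int (a * c) = of_nat \<Delta>"
      by (auto simp: index_forms_eq_image Nrm_def)
    have "a * c \<le> - a" "a * c \<le> c"
      using \<open>0 < a\<close> \<open>c < 0\<close> mult_left_mono[of c "-1" a] mult_right_mono_neg[of 1 a c] by simp_all
    moreover have "cmod B ^ 2 - real_of_int (a * c) = real \<Delta>"
      using arg_cong[OF disc, of Re] by (simp flip: complex_norm_square)
    ultimately have "a \<le> int \<Delta>" "- c \<le> int \<Delta>" "cmod B ^ 2 \<le> real \<Delta>"
      using \<open>0 < a\<close> \<open>c < 0\<close> zero_le_power2[of "cmod B"] by linarith+
    then show "F \<in> ?box"
      using F B \<open>0 < a\<close> \<open>c < 0\<close> by (auto intro: real_le_rsqrt)
  qed
  then show ?thesis
    by (rule finite_subset) (use finite_Od_norm_le[OF assms] in auto)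
qed

lemma slash_P_kD:
  assumes "0 < d" "mdet M \<noteq> 0"
  shows "slash k (P_kD d k \<Delta>) M = (\<Sum>F\<in>index_forms d \<Delta>. form_poly (form_act M F) ^ k)"
  unfolding P_kD_eq_sum_index_forms using finite_index_forms[OF assms(1)] assms(2)
  by (intro slash_sum_form_power) (auto simp: index_forms_def hermitian_if_int_forms)

lemma bieval_P_kD_eq_if_bij:
  assumes "bij_betw \<phi> (index_forms d \<Delta>) (index_forms d \<Delta>)"
    and "\<And>F. F \<in> index_forms d \<Delta> \<Longrightarrow> bieval (form_poly (\<phi> F)) z w = bieval (form_poly F) z' w'"
  shows "bieval (P_kD d k \<Delta>) z' w' = bieval (P_kD d k \<Delta>) z w"
proof -
  have "bieval (P_kD d k \<Delta>) z w = (\<Sum>F\<in>index_forms d \<Delta>. bieval (form_poly (\<phi> F)) z w ^ k)"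
    using sum.reindex_bij_betw[OF assms(1), of "\<lambda>F. bieval (form_poly F) z w ^ k"]
    by (simp add: P_kD_eq_sum_index_forms)
  also have "\<dots> = bieval (P_kD d k \<Delta>) z' w'"
    using assms(2) by (simp add: P_kD_eq_sum_index_forms)
  finally show ?thesis
    by simp
qed

section \<open>Cancellation in the group ring\<close>

lemma sum_list_sum_eq_sum_count:
  fixes f :: "'a \<Rightarrow> 'b::ring_1" and L :: "(int \<times> 'm) list"
  assumes "finite U" "\<And>c M. (c, M) \<in> set L \<Longrightarrow> inj_on (act M) X \<and> act M ` X \<subseteq> U"
  shows "(\<Sum>(c, M)\<leftarrow>L. of_int c * (\<Sum>x\<in>X. f (act M x)))
    = (\<Sum>y\<in>U. of_int (\<Sum>(c, M)\<leftarrow>L. c * of_bool (y \<in> act M ` X)) * f y)"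
  using assms(2)
proof (induction L)
  case (Cons p L)
  obtain c M where p: "p = (c, M)"
    by (cases p)
  then have "inj_on (act M) X" "act M ` X \<subseteq> U"
    using Cons.prems by auto
  moreover have "of_bool (y \<in> act M ` X) * f y = (if y \<in> act M ` X then f y else 0)" for y
    by simp
  ultimately have "(\<Sum>x\<in>X. f (act M x)) = (\<Sum>y\<in>U. of_bool (y \<in> act M ` X) * f y)"
    using sum.inter_restrict[OF assms(1), of f "act M ` X"] by (simp add: sum.reindex Int_absorb1)
  moreover have "(\<Sum>(c, M)\<leftarrow>L. of_int c * (\<Sum>x\<in>X. f (act M x)))
      = (\<Sum>y\<in>U. of_int (\<Sum>(c, M)\<leftarrow>L. c * of_bool (y \<in> act M ` X)) * f y)"
    by (rule Cons.IH) (use Cons.prems in auto)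
  ultimately have "(\<Sum>(c, M)\<leftarrow>p # L. of_int c * (\<Sum>x\<in>X. f (act M x)))
      = of_int c * (\<Sum>y\<in>U. of_bool (y \<in> act M ` X) * f y)
        + (\<Sum>y\<in>U. of_int (\<Sum>(c, M)\<leftarrow>L. c * of_bool (y \<in> act M ` X)) * f y)"
    by (simp add: p)
  then show ?case
    by (simp add: p sum_distrib_left flip: sum.distrib) (simp add: algebra_simps)
qed simp

lemma sum_list_sum_odd_eq_0:
  fixes f :: "'a \<Rightarrow> 'b::ring_1" and L :: "(int \<times> 'm) list"
  assumes "finite X"
    and "\<And>c M. (c, M) \<in> set L \<Longrightarrow> inj_on (act M) X \<and> act M ` X \<subseteq> Y"
    and "\<And>y. y \<in> Y \<Longrightarrow> n y \<in> Y \<and> n (n y) = y \<and> n y \<noteq> y \<and> f (n y) = - f y"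
    and "\<And>y. y \<in> Y \<Longrightarrow>
      (\<Sum>(c, M)\<leftarrow>L. c * of_bool (n y \<in> act M ` X)) = (\<Sum>(c, M)\<leftarrow>L. c * of_bool (y \<in> act M ` X))"
  shows "(\<Sum>(c, M)\<leftarrow>L. of_int c * (\<Sum>x\<in>X. f (act M x))) = 0"
proof -
  define W where "W = (\<Union>p\<in>set L. act (snd p) ` X)"
  define U where "U = W \<union> n ` W"
  have "W \<subseteq> Y"
    using assms(2) by (force simp: W_def)
  then have "U \<subseteq> Y"
    using assms(3) by (auto simp: U_def)
  have "finite U"
    using assms(1) by (simp add: U_def W_def)
  have "(\<Sum>(c, M)\<leftarrow>L. of_int c * (\<Sum>x\<in>X. f (act M x)))
      = (\<Sum>y\<in>U. of_int (\<Sum>(c, M)\<leftarrow>L. c * of_bool (y \<in> act M ` X)) * f y)"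
    using assms(2) by (intro sum_list_sum_eq_sum_count[OF \<open>finite U\<close>]) (force simp: U_def W_def)
  also have "\<dots> = 0"
  proof (rule sum_involution_eq_0[where h = n])
    fix y
    assume "y \<in> U"
    with \<open>U \<subseteq> Y\<close> have y: "y \<in> Y"
      by blast
    show "n y \<in> U"
      using \<open>y \<in> U\<close> \<open>W \<subseteq> Y\<close> assms(3) by (force simp: U_def)
    show "n (n y) = y" "n y \<noteq> y"
      using assms(3)[OF y] by simp_all
    show "of_int (\<Sum>(c, M)\<leftarrow>L. c * of_bool (n y \<in> act M ` X)) * f (n y)
        + of_int (\<Sum>(c, M)\<leftarrow>L. c * of_bool (y \<in> act M ` X)) * f y = 0"
      using assms(3,4)[OF y] by simp
  qed
  finally show ?thesis .
qed

definition sign_change :: "herm_form \<Rightarrow> int" where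
  "sign_change F = of_bool (Re (fst F) < 0) - of_bool (Re (snd (snd F)) < 0)"

lemma of_bool_uminus_index_forms:
  assumes "\<not> (\<exists>b\<in>Od d. Nrm b = of_nat \<Delta>)" "H \<in> int_forms d \<Delta>"
  shows "of_bool (- H \<in> index_forms d \<Delta>) = of_bool (H \<in> index_forms d \<Delta>) + sign_change H"
  using int_forms_Re_nonzero[OF assms] uminus_int_forms[OF assms(2)] assms(2)
  by (auto simp: index_forms_def sign_change_def)

lemma slash_gr_P_kD_eq_0:
  assumes "0 < d" "odd k" "\<not> (\<exists>b\<in>Od d. Nrm b = of_nat \<Delta>)"
    and "\<And>c M. (c, M) \<in> set L \<Longrightarrow> unimodular d M"
    and "\<And>G. G \<in> int_forms d \<Delta> \<Longrightarrow> (\<Sum>(c, M)\<leftarrow>L. c * sign_change (form_act (minv M) G)) = 0"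
  shows "slash_gr k (P_kD d k \<Delta>) L = 0"
proof -
  let ?X = "index_forms d \<Delta>"
  have X: "?X \<subseteq> int_forms d \<Delta>"
    by (auto simp: index_forms_def)
  have "slash_gr k (P_kD d k \<Delta>) L = (\<Sum>(c, M)\<leftarrow>L. of_int c * (\<Sum>F\<in>?X. form_poly (form_act M F) ^ k))"
    unfolding slash_gr_def
  proof (intro arg_cong[where f = sum_list] map_cong refl)
    fix p
    assume "p \<in> set L"
    moreover obtain c M where p: "p = (c, M)"
      by (cases p)
    ultimately have "mdet M \<noteq> 0"
      using assms(4) unimodular_mdet_nonzero by blast
    then show "(case p of (n, M) \<Rightarrow> of_int n * slash k (P_kD d k \<Delta>) M)
        = (case p of (c, M) \<Rightarrow> of_int c * (\<Sum>F\<in>?X. form_poly (form_act M F) ^ k))"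
      by (simp add: p slash_P_kD[OF assms(1)])
  qed
  also have "\<dots> = 0"
  proof (rule sum_list_sum_odd_eq_0[where Y = "int_forms d \<Delta>" and n = uminus])
    show "finite ?X"
      by (rule finite_index_forms[OF assms(1)])
  next
    fix c M
    assume "(c, M) \<in> set L"
    then have M: "unimodular d M"
      by (rule assms(4))
    have "inj_on (form_act M) ?X"
      using X M by (intro inj_on_inverseI[of _ "form_act (minv M)"])
        (auto simp: form_act_minv unimodular_mdet_nonzero hermitian_if_int_forms)
    then show "inj_on (form_act M) ?X \<and> form_act M ` ?X \<subseteq> int_forms d \<Delta>"
      using X form_act_int_forms[OF M] by blast
  next
    fix G
    assume G: "G \<in> int_forms d \<Delta>"
    have "- G \<noteq> G"
    proof
      assume "- G = G"
      from arg_cong[OF this, of "\<lambda>F. Re (fst F)"] have "Re (fst G) = 0"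
        by simp
      then show False
        using int_forms_Re_nonzero[OF assms(3) G] by simp
    qed
    then show "- G \<in> int_forms d \<Delta> \<and> - (- G) = G \<and> - G \<noteq> G \<and> form_poly (- G) ^ k = - (form_poly G ^ k)"
      using G assms(2) by (simp add: uminus_int_forms form_poly_uminus)
    have "c * of_bool (- G \<in> form_act M ` ?X)
        = c * of_bool (G \<in> form_act M ` ?X) + c * sign_change (form_act (minv M) G)"
      if "(c, M) \<in> set L" for c M
    proof -
      have M: "unimodular d M"
        using that by (rule assms(4))
      have H: "form_act (minv M) G \<in> int_forms d \<Delta>"
        using M G by (simp add: form_act_int_forms unimodular_minv)
      have "G \<in> form_act M ` ?X \<longleftrightarrow> form_act (minv M) G \<in> ?X"
        by (rule image_form_act_iff[OF M X G])
      moreover have "- G \<in> form_act M ` ?X \<longleftrightarrow> - form_act (minv M) G \<in> ?X"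
        using image_form_act_iff[OF M X uminus_int_forms[OF G]] by (simp add: form_act_uminus)
      ultimately show ?thesis
        using of_bool_uminus_index_forms[OF assms(3) H] by (simp add: distrib_left)
    qed
    then have "(\<Sum>(c, M)\<leftarrow>L. c * of_bool (- G \<in> form_act M ` ?X))
        = (\<Sum>(c, M)\<leftarrow>L. c * of_bool (G \<in> form_act M ` ?X) + c * sign_change (form_act (minv M) G))"
      by (intro arg_cong[where f = sum_list] map_cong) auto
    also have "\<dots> = (\<Sum>(c, M)\<leftarrow>L. c * of_bool (G \<in> form_act M ` ?X))
        + (\<Sum>(c, M)\<leftarrow>L. c * sign_change (form_act (minv M) G))"
      by (induction L) auto
    finally show "(\<Sum>(c, M)\<leftarrow>L. c * of_bool (- G \<in> form_act M ` ?X))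
        = (\<Sum>(c, M)\<leftarrow>L. c * of_bool (G \<in> form_act M ` ?X))"
      using assms(5)[OF G] by simp
  qed
  finally show ?thesis .
qed

lemma bieval_P_kD_swap: "bieval (P_kD d k \<Delta>) w z = bieval (P_kD d k \<Delta>) z w"
proof (rule bieval_P_kD_eq_if_bij[where \<phi> = "\<lambda>(A, B, C). (A, cnj B, C)"])
  show "bij_betw (\<lambda>(A, B, C). (A, cnj B, C)) (index_forms d \<Delta>) (index_forms d \<Delta>)"
    by (rule bij_betw_byWitness[where f' = "\<lambda>(A, B, C). (A, cnj B, C)"])
      (auto simp: index_forms_def int_forms_def form_disc_def Od_cnj mult.commute)
  show "bieval (form_poly ((\<lambda>(A, B, C). (A, cnj B, C)) F)) z w = bieval (form_poly F) w z" for F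
    by (cases F) (simp add: algebra_simps)
qed

lemma bieval_P_kD_unit:
  assumes "is_unit_Od d u"
  shows "bieval (P_kD d k \<Delta>) (u * z) (cnj u * w) = bieval (P_kD d k \<Delta>) z w"
proof (rule bieval_P_kD_eq_if_bij[where \<phi> = "\<lambda>(A, B, C). (A, u * B, C)"])
  have u: "u \<in> Od d" "cnj u \<in> Od d" "u * cnj u = 1"
    using assms is_unit_Od_mult_cnj Od_cnj by (auto simp: is_unit_Od_def)
  then have cancel: "cnj u * (u * B) = B" "u * (cnj u * B) = B"
      "u * B * (cnj u * cnj B) = B * cnj B" "cnj u * B * (u * cnj B) = B * cnj B" for B
    by (simp_all add: algebra_simps)
  show "bij_betw (\<lambda>(A, B, C). (A, u * B, C)) (index_forms d \<Delta>) (index_forms d \<Delta>)"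
    by (rule bij_betw_byWitness[where f' = "\<lambda>(A, B, C). (A, cnj u * B, C)"])
      (auto simp: index_forms_def int_forms_def form_disc_def Od_mult u cancel)
  show "bieval (form_poly ((\<lambda>(A, B, C). (A, u * B, C)) F)) z w = bieval (form_poly F) (u * z) (cnj u * w)"
    for F
    using u(3) by (cases F) (simp add: algebra_simps)
qed

lemma unimodular_one_m: "unimodular d one_m"
  and unimodular_S_m: "unimodular d S_m"
  and unimodular_T_m: "unimodular d T_m"
  by (simp_all add: unimodular_def one_m_def S_m_def T_m_def mdet_def Nrm_def Od_uminus)

lemma minv_one_m: "minv one_m = one_m"
  and minv_S_m: "minv S_m = (0, 1, -1, 0)"
  and minv_T_m: "minv T_m = (1, -1, 0, 1)"
  by (simp_all add: minv_def one_m_def S_m_def T_m_def)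

lemma slash_gr_P_kD_one_S:
  assumes "0 < d" "odd k" "\<not> (\<exists>b\<in>Od d. Nrm b = of_nat \<Delta>)"
  shows "slash_gr k (P_kD d k \<Delta>) [(1, one_m), (1, S_m)] = 0"
proof (rule slash_gr_P_kD_eq_0[OF assms])
  show "unimodular d M" if "(c, M) \<in> set [(1, one_m), (1, S_m)]" for c M
    using that unimodular_one_m unimodular_S_m by auto
  show "(\<Sum>(c, M)\<leftarrow>[(1, one_m), (1, S_m)]. c * sign_change (form_act (minv M) G)) = 0" for G
    by (cases G) (simp add: minv_one_m minv_S_m, simp add: form_act_def sign_change_def)
qed

lemma mmul_T_S_eps: "mmul (mmul T_m S_m) eps_m = (-1, -1, -1, 0)"
  by (simp add: mmul_def T_m_def S_m_def eps_m_def)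

lemma slash_gr_P_kD_one_TSeps_T:
  assumes "0 < d" "odd k" "\<not> (\<exists>b\<in>Od d. Nrm b = of_nat \<Delta>)"
  shows "slash_gr k (P_kD d k \<Delta>) [(1, one_m), (1, mmul (mmul T_m S_m) eps_m), (-1, T_m)] = 0"
  unfolding mmul_T_S_eps
proof (rule slash_gr_P_kD_eq_0[OF assms])
  have "unimodular d (-1, -1, -1, 0)"
    by (simp add: unimodular_def mdet_def Nrm_def Od_uminus)
  then show "unimodular d M" if "(c, M) \<in> set [(1, one_m), (1, (-1, -1, -1, 0)), (-1, T_m)]" for c M
    using that unimodular_one_m unimodular_T_m by auto
  have "minv (-1, -1, -1, 0) = (0, -1, -1, 1)"
    by (simp add: minv_def Let_def)
  then show "(\<Sum>(c, M)\<leftarrow>[(1, one_m), (1, (-1, -1, -1, 0)), (-1, T_m)]. c * sign_change (form_act (minv M) G)) = 0"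
    for G
    by (cases G) (simp add: minv_one_m minv_T_m, simp add: form_act_def sign_change_def)
qed

lemma omega_d_7: "omega_d 7 = omega7"
  by (simp add: omega_d_def omega7_def)

lemma omega7_mult_one_minus: "omega7 * (1 - omega7) = 2"
proof -
  have "sqrt 7 * sqrt 7 = (7 :: real)"
    by simp
  then show ?thesis
    by (simp add: omega7_def complex_eq_iff field_simps)
qed

lemma mmul_S_Tinv_Tw_S: "mmul (mmul (mmul S_m (minv T_m)) Tw_m) S_m = (-1, 0, omega7 - 1, -1)"
  by (simp add: mmul_def minv_def Let_def S_m_def T_m_def Tw_m_def)

lemma mmul_T_Twinv_S_Tw: "mmul (mmul (mmul T_m (minv Tw_m)) S_m) Tw_m = (1 - omega7, 1, 1, omega7)"
proof -
  have "mmul (mmul (mmul T_m (minv Tw_m)) S_m) Tw_m = (1 - omega7, omega7 * (1 - omega7) - 1, 1, omega7)"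
    by (simp add: mmul_def minv_def S_m_def T_m_def Tw_m_def algebra_simps)
  then show ?thesis
    by (simp add: omega7_mult_one_minus)
qed

lemma slash_gr_P_kD_omega7:
  assumes "odd k" "\<not> (\<exists>b\<in>Od 7. Nrm b = of_nat \<Delta>)"
  shows "slash_gr k (P_kD 7 k \<Delta>)
    [(1, one_m), (-1, Tw_m),
     (-1, mmul (mmul (mmul S_m (minv T_m)) Tw_m) S_m),
     (-1, mmul (mmul (mmul T_m (minv Tw_m)) S_m) Tw_m)] = 0"
  unfolding mmul_S_Tinv_Tw_S mmul_T_Twinv_S_Tw
proof (rule slash_gr_P_kD_eq_0[OF _ assms])
  let ?M3 = "(-1, 0, omega7 - 1, -1)" and ?M4 = "(1 - omega7, 1, 1, omega7)"
  have det: "(1 - omega7) * omega7 - 1 = 1"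
    using omega7_mult_one_minus by (simp add: algebra_simps)
  have minv: "minv Tw_m = (1, - omega7, 0, 1)" "minv ?M3 = (-1, 0, 1 - omega7, -1)"
    "minv ?M4 = (omega7, -1, -1, 1 - omega7)"
    by (simp_all add: minv_def Tw_m_def Let_def det)
  have "omega7 \<in> Od 7"
    using omega_d_in_Od[of 7] by (simp add: omega_d_7)
  then have "unimodular 7 Tw_m" "unimodular 7 ?M3" "unimodular 7 ?M4"
    using det by (simp_all add: unimodular_def Tw_m_def mdet_def Nrm_def Od_uminus Od_diff)
  then show "unimodular 7 M" if "(c, M) \<in> set [(1, one_m), (-1, Tw_m), (-1, ?M3), (-1, ?M4)]" for c M
    using that unimodular_one_m by auto
  fix G
  let ?H2 = "form_act (minv Tw_m) G" and ?H3 = "form_act (minv ?M3) G" and ?H4 = "form_act (minv ?M4) G"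
  have "fst ?H2 = fst G" "snd (snd ?H3) = snd (snd G)"
    "fst ?H4 = snd (snd ?H2)" "snd (snd ?H4) = fst ?H3"
    by (cases G; simp add: minv form_act_def algebra_simps)+
  then show "(\<Sum>(c, M)\<leftarrow>[(1, one_m), (-1, Tw_m), (-1, ?M3), (-1, ?M4)].
      c * sign_change (form_act (minv M) G)) = 0"
    by (simp add: sign_change_def minv_one_m)
qed (simp add: omega7_def)

theorem proposition2p5:
  fixes d k \<Delta> :: nat
  assumes "d \<in> {1, 2, 3, 7, 11}"
    and "odd k"
    and "0 < \<Delta>"
    and "\<not> (\<exists>b \<in> Od d. Nrm b = of_nat \<Delta>)"
  shows "(\<forall>z w. bieval (P_kD d k \<Delta>) w z = bieval (P_kD d k \<Delta>) z w)
    \<and> (\<forall>u. is_unit_Od d u \<longrightarrow>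
         (\<forall>z w. bieval (P_kD d k \<Delta>) (u * z) (cnj u * w) = bieval (P_kD d k \<Delta>) z w))
    \<and> slash_gr k (P_kD d k \<Delta>) [(1, one_m), (1, S_m)] = 0
    \<and> slash_gr k (P_kD d k \<Delta>) [(1, one_m), (1, mmul (mmul T_m S_m) eps_m), (-1, T_m)] = 0
    \<and> (d = 7 \<longrightarrow> slash_gr k (P_kD d k \<Delta>)
         [(1, one_m), (-1, Tw_m),
          (-1, mmul (mmul (mmul S_m (minv T_m)) Tw_m) S_m),
          (-1, mmul (mmul (mmul T_m (minv Tw_m)) S_m) Tw_m)] = 0)"
proof -
  have d: "0 < d"
    using assms(1) by auto
  have "d = 7 \<longrightarrow> slash_gr k (P_kD d k \<Delta>)
         [(1, one_m), (-1, Tw_m),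
          (-1, mmul (mmul (mmul S_m (minv T_m)) Tw_m) S_m),
          (-1, mmul (mmul (mmul T_m (minv Tw_m)) S_m) Tw_m)] = 0"
    using slash_gr_P_kD_omega7[OF assms(2)] assms(4) by blast
  then show ?thesis
    using bieval_P_kD_swap bieval_P_kD_unit slash_gr_P_kD_one_S[OF d assms(2,4)]
      slash_gr_P_kD_one_TSeps_T[OF d assms(2,4)]
    by blast
qed

end
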